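(* Consider the unknown polynomial system $\dot x=A_\star Z(x)+B_\star W(x)u$ and data $\{\dot x^j,z^j,v^j\}_{j=0}^{T-1}$ generated by $\dot x^j=A_\star z^j+B_\star v^j+d^j$, where the unknown disturbance matrix $D:=[d^0\ \cdots\ d^{T-1}]$ satisfies $DD^\top\preceq T\omega I_n$ for a known $\omega\ge0$. Let $\epsilon>0$. Let $X_1:=[\dot x^0\ \cdots\ \dot x^{T-1}]$, $Z_0:=[z^0\ \cdots\ z^{T-1}]$, $V_0:=[v^0\ \cdots\ v^{T-1}]$, assume $\begin{bmatrix}Z_0\\ V_0\end{bmatrix}$ has full row rank, and define $$A_{\mathrm{e}}:=\begin{bmatrix}Z_0\\ V_0\end{bmatrix}\begin{bmatrix}Z_0\\ V_0\end{bmatrix}^\top,\ B_{\mathrm{e}}:=-\begin{bmatrix}Z_0\\ V_0\end{bmatrix}X_1^\top,\ C_{\mathrm{e}}:=-T\omega I+X_1X_1^\top,$$ $$\bar\zeta:=-A_{\mathrm{e}}^{-1}B_{\mathrm{e}},\quad \bar P:=A_{\mathrm{e}}^{-1/2},\quad \bar Q:=B_{\mathrm{e}}^\top A_{\mathrm{e}}^{-1}B_{\mathrm{e}}-C_{\mathrm{e}}.$$ If there exist polynomials $\ell,\eta,h:\mathbb{R}^n\to\mathbb{R}$ and a polynomial $K:\mathbb{R}^n\to\mathbb{R}^m$ such that for all $x\in\mathbb{R}^n$, $\eta(x)>0$ and $H(x)\preceq0$ with $$H(x):=\begin{bmatrix}\ell(x)h(x)+\epsilon+\frac{\partial h}{\partial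 x}(x)\,\bar\zeta^\top\begin{bmatrix}Z(x)\\ W(x)K(x)\end{bmatrix} & \star & \star\\ \eta(x)\bar P\begin{bmatrix}Z(x)\\ W(x)K(x)\end{bmatrix} & -2\eta(x)I_p & \star\\ \bar Q^{1/2}\frac{\partial h}{\partial x}(x)^\top & 0 & -2\eta(x)I_n\end{bmatrix},$$ then $\mathcal{I}:=\{x\in\mathbb{R}^n:h(x)\le0\}$ is invariant for the closed-loop system $\dot x=A_\star Z(x)+B_\star W(x)K(x)$.
   Context: $A_\star\in\mathbb{R}^{n\times N_A}$, $B_\star\in\mathbb{R}^{n\times N_B}$ are unknown constant matrices; $Z:\mathbb{R}^n\to\mathbb{R}^{N_A}$ is a known vector of monomials and $W:\mathbb{R}^n\to\mathbb{R}^{N_B\times m}$ a known matrix of monomials; $p:=N_A+N_B$; $z^j=Z(x^j)$, $v^j=W(x^j)u^j$ for sampled states/inputs, $\dot x^j$ sampled state derivatives. $\star$ denotes blocks determined by symmetry; $M^{1/2}$ is the positive semidefinite square root of $M\succeq0$; $\frac{\partial h}{\partial x}(x)$ is the gradient as a row vector. A set $\mathcal{I}$ is invariant for $\dot x=a(x)$ ($a$ polynomial) if every maximal solution starting in $\mathcal{I}$ remains in $\mathcal{I}$ on its whole interval of existence. *)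

theory Defs
  imports "HOL-Analysis.Analysis"
begin

definition monomial_fun :: "(real^'n::finite \<Rightarrow> real) \<Rightarrow> bool" where
  "monomial_fun f \<longleftrightarrow> (\<exists>(c::real) (\<alpha>::'n \<Rightarrow> nat). \<forall>x. f x = c * (\<Prod>i\<in>UNIV. (x$i) ^ \<alpha> i))"

definition poly_fun :: "(real^'n::finite \<Rightarrow> real) \<Rightarrow> bool" where
  "poly_fun f \<longleftrightarrow> (\<exists>(S::('n \<Rightarrow> nat) set) (c::('n \<Rightarrow> nat) \<Rightarrow> real). finite S \<and>
      (\<forall>x. f x = (\<Sum>\<alpha>\<in>S. c \<alpha> * (\<Prod>i\<in>UNIV. (x$i) ^ \<alpha> i))))"

definition poly_vec_fun :: "(real^'n::finite \<Rightarrow> real^'k::finite) \<Rightarrow> bool" where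
  "poly_vec_fun F \<longleftrightarrow> (\<forall>k. poly_fun (\<lambda>x. F x $ k))"

definition psd :: "real^'n::finite^'n \<Rightarrow> bool" where
  "psd M \<longleftrightarrow> transpose M = M \<and> (\<forall>v. 0 \<le> v \<bullet> (M *v v))"

definition loewner_le :: "real^'n::finite^'n \<Rightarrow> real^'n^'n \<Rightarrow> bool" where
  "loewner_le M N \<longleftrightarrow> psd (N - M)"

definition msqrt :: "real^'n::finite^'n \<Rightarrow> real^'n^'n" where
  "msqrt M = (THE S. psd S \<and> S ** S = M)"

text \<open>Gradient of h at x (as a vector; the row vector of the paper).\<close>
definition grad :: "(real^'n::finite \<Rightarrow> real) \<Rightarrow> real^'n \<Rightarrow> real^'n" where
  "grad h x = (\<chi> i. frechet_derivative h (at x) (axis i 1))"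

definition ode_solution :: "(real^'n::finite \<Rightarrow> real^'n) \<Rightarrow> (real \<Rightarrow> real^'n) \<Rightarrow> real set \<Rightarrow> bool" where
  "ode_solution a x J \<longleftrightarrow> is_interval J \<and> 0 \<in> J \<and> (\<forall>t\<in>J. 0 \<le> t) \<and>
     (\<forall>t\<in>J. (x has_vector_derivative a (x t)) (at t within J))"

definition maximal_solution :: "(real^'n::finite \<Rightarrow> real^'n) \<Rightarrow> (real \<Rightarrow> real^'n) \<Rightarrow> real set \<Rightarrow> bool" where
  "maximal_solution a x J \<longleftrightarrow> ode_solution a x J \<and>
     (\<forall>y J'. ode_solution a y J' \<and> J \<subseteq> J' \<and> (\<forall>t\<in>J. y t = x t) \<longrightarrow> J' = J)"

definition invariant_set :: "(real^'n::finite \<Rightarrow> real^'n) \<Rightarrow> (real^'n) set \<Rightarrow> bool" where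
  "invariant_set a S \<longleftrightarrow> (\<forall>x J. maximal_solution a x J \<and> x 0 \<in> S \<longrightarrow> (\<forall>t\<in>J. x t \<in> S))"

text \<open>Stacking [u; v] of vectors and [M; N] of matrices (p = N_A + N_B as sum type).\<close>
definition vstack :: "real^'a::finite \<Rightarrow> real^'b::finite \<Rightarrow> real^('a + 'b)" where
  "vstack u v = (\<chi> i. case i of Inl a \<Rightarrow> u $ a | Inr b \<Rightarrow> v $ b)"

definition mstack :: "real^'c::finite^'a::finite \<Rightarrow> real^'c^'b::finite \<Rightarrow> real^'c^('a + 'b)" where
  "mstack M N = (\<chi> i. case i of Inl a \<Rightarrow> M $ a | Inr b \<Rightarrow> N $ b)"

text \<open>Symmetric 3x3 block matrix
  [ s    *     *  ]
  [ u   Mp     *  ]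
  [ w    0    Mn  ]
 with scalar s, p-vector u, n-vector w, indexed by unit + ('p + 'n).\<close>
definition block3 :: "real \<Rightarrow> real^'p::finite \<Rightarrow> real^'n::finite \<Rightarrow> real^'p^'p \<Rightarrow> real^'n^'n
     \<Rightarrow> real^(unit + ('p + 'n))^(unit + ('p + 'n))" where
  "block3 s u w Mp Mn = (\<chi> i j. case (i, j) of
      (Inl _, Inl _) \<Rightarrow> s
    | (Inr (Inl a), Inl _) \<Rightarrow> u $ a
    | (Inl _, Inr (Inl a)) \<Rightarrow> u $ a
    | (Inr (Inr k), Inl _) \<Rightarrow> w $ k
    | (Inl _, Inr (Inr k)) \<Rightarrow> w $ k
    | (Inr (Inl a), Inr (Inl b)) \<Rightarrow> Mp $ a $ b
    | (Inr (Inr k), Inr (Inr l)) \<Rightarrow> Mn $ k $ l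
    | _ \<Rightarrow> 0)"

end

theory Submission
  imports Defs
begin

(* The noise bound D D^T <= T w I confines the unknown parameters Theta = [A B] to a matrix
   ellipsoid determined by the data, Theta Ae Theta^T + Theta Be + Be^T Theta^T + Ce <= 0.
   Completing the square shows that every Theta in it satisfies
   |Ae^(1/2) (Theta^T - zeta) g|^2 <= g^T Q g, so by Cauchy-Schwarz the derivative of h along any
   data-consistent system is at most grad h . zeta^T phi + |Q^(1/2) grad h| |P phi|.  Testing
   H(x) <= 0 against a Schur-complement vector and applying Young's inequality bounds this by
   -l h - eps, hence grad h . f < 0 wherever h = 0, and no solution can leave {h <= 0}. *)

lemma transpose_add: "transpose (A + B) = transpose A + transpose (B::'a::ab_group_add^'n^'m)"
  by (simp add: transpose_def vec_eq_iff)

lemma transpose_diff: "transpose (A - B) = transpose A - transpose (B::'a::ab_group_add^'n^'m)"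
  by (simp add: transpose_def vec_eq_iff)

lemma matrix_vector_mult_uminus: "(- A) *v x = - (A *v (x::'a::comm_ring_1^'n))"
  by (simp add: matrix_vector_mult_def vec_eq_iff sum_negf)

lemma inner_transpose_matrix_vector: "x \<bullet> (transpose A *v y) = (A *v x) \<bullet> (y::real^'m::finite)"
  by (metis dot_lmul_matrix inner_commute transpose_matrix_vector)

lemma inner_gram_matrix_vector:
  "y \<bullet> ((M ** transpose M) *v y) = (transpose M *v y) \<bullet> (transpose M *v (y::real^'m::finite))"
  by (metis inner_transpose_matrix_vector matrix_vector_mul_assoc transpose_transpose)

lemma symmetric_inner_matrix_vector:
  fixes N :: "real^'n::finite^'n"
  assumes "transpose N = N"
  shows "x \<bullet> (N *v y) = (N *v x) \<bullet> y"
  by (metis assms inner_transpose_matrix_vector)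

lemma symmetric_if_inner_matrix_vector:
  fixes S :: "real^'n::finite^'n"
  assumes "\<And>x y. x \<bullet> (S *v y) = (S *v x) \<bullet> y"
  shows "transpose S = S"
proof -
  have "x \<bullet> (transpose S *v y) = x \<bullet> (S *v y)" for x y
    by (metis assms inner_transpose_matrix_vector)
  then have "transpose S *v y = S *v y" for y
    by (metis inner_commute vector_eq_rdot)
  then show ?thesis by (simp add: matrix_eq)
qed

lemma matrix_inv_symmetric:
  fixes A :: "real^'p::finite^'p"
  assumes "invertible A" "transpose A = A"
  shows "A ** matrix_inv A = mat 1" "matrix_inv A ** A = mat 1"
    "transpose (matrix_inv A) = matrix_inv A"
proof -
  show inv: "A ** matrix_inv A = mat 1" "matrix_inv A ** A = mat 1"
    using assms(1) unfolding invertible_def matrix_inv_def by (metis (mono_tags, lifting) someI_ex)+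
  have "transpose (matrix_inv A) ** A = mat 1"
    using inv(1) assms(2) by (metis matrix_transpose_mul transpose_mat)
  then have "transpose (matrix_inv A) = transpose (matrix_inv A) ** (A ** matrix_inv A)"
    using inv(1) by (simp add: matrix_mul_rid)
  also have "\<dots> = matrix_inv A"
    using \<open>transpose (matrix_inv A) ** A = mat 1\<close> by (simp add: matrix_mul_assoc)
  finally show "transpose (matrix_inv A) = matrix_inv A" .
qed

lemma linear_coeff_eq_0_if_quadratic_nonneg:
  fixes a c :: real
  assumes "\<And>t. 0 \<le> 2 * t * a + t\<^sup>2 * c"
  shows "a = 0"
proof (rule ccontr)
  assume "a \<noteq> 0"
  define C where "C = \<bar>c\<bar> + 1"
  have C: "C > 0" "c \<le> C - 1" unfolding C_def by auto
  define t where "t = - a / C"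
  have "0 \<le> 2 * t * a + t\<^sup>2 * c" by (rule assms)
  also have "\<dots> \<le> 2 * t * a + t\<^sup>2 * (C - 1)"
    using C(2) by (intro add_left_mono mult_left_mono) auto
  also have "\<dots> = - a\<^sup>2 * (C + 1) / C\<^sup>2"
    unfolding t_def using C(1) by (simp add: field_simps power2_eq_square)
  also have "\<dots> < 0"
    using \<open>a \<noteq> 0\<close> C(1) by (intro divide_neg_pos mult_neg_pos) auto
  finally show False by simp
qed

lemma psd_mult_eq_0_if_quadratic_form_eq_0:
  fixes S :: "real^'n::finite^'n"
  assumes "psd S" "x \<bullet> (S *v x) = 0"
  shows "S *v x = 0"
proof -
  have sym: "transpose S = S" and pos: "\<And>v. 0 \<le> v \<bullet> (S *v v)"
    using assms(1) unfolding psd_def by auto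
  have "w \<bullet> (S *v x) = 0" for w
  proof (rule linear_coeff_eq_0_if_quadratic_nonneg)
    fix t :: real
    have "0 \<le> (x + t *\<^sub>R w) \<bullet> (S *v (x + t *\<^sub>R w))" by (rule pos)
    also have "\<dots> = x \<bullet> (S *v x) + t * (x \<bullet> (S *v w)) + t * (w \<bullet> (S *v x)) + t\<^sup>2 * (w \<bullet> (S *v w))"
      by (simp add: algebra_simps inner_add_left inner_add_right power2_eq_square)
    also have "x \<bullet> (S *v w) = w \<bullet> (S *v x)"
      using symmetric_inner_matrix_vector[OF sym, of x w] by (simp add: inner_commute)
    finally show "0 \<le> 2 * t * (w \<bullet> (S *v x)) + t\<^sup>2 * (w \<bullet> (S *v w))"
      using assms(2) by simp
  qed
  then show ?thesis by (metis inner_eq_zero_iff)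
qed

lemma psd_quadratic_form_mult_self:
  fixes S :: "real^'n::finite^'n"
  assumes "psd S"
  shows "x \<bullet> ((S ** S) *v x) = (norm (S *v x))\<^sup>2"
  using assms unfolding psd_def
  by (simp add: dot_square_norm symmetric_inner_matrix_vector matrix_vector_mul_assoc[symmetric])

section \<open>Spectral theorem and matrix square roots\<close>

lemma quadratic_form_max_on_subspace:
  fixes N :: "real^'n::finite^'n"
  assumes "subspace V" "V \<noteq> {0}"
  obtains v where "v \<in> V" "norm v = 1" "\<And>x. x \<in> V \<Longrightarrow> x \<bullet> (N *v x) \<le> (v \<bullet> (N *v v)) * (x \<bullet> x)"
proof -
  define K where "K = V \<inter> sphere 0 1"
  have cK: "compact K" unfolding K_def
    by (subst Int_commute) (intro compact_Int_closed compact_sphere closed_subspace assms(1))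
  obtain y where y: "y \<in> V" "y \<noteq> 0" using assms subspace_0 by blast
  then have "y /\<^sub>R norm y \<in> K" unfolding K_def using assms(1) by (simp add: subspace_scale)
  then have neK: "K \<noteq> {}" by blast
  have cont: "continuous_on K (\<lambda>x. x \<bullet> (N *v x))"
    by (intro continuous_on_inner continuous_on_id matrix_vector_mult_linear_continuous_on)
  obtain v where v: "v \<in> K" and vmax: "\<And>u. u \<in> K \<Longrightarrow> u \<bullet> (N *v u) \<le> v \<bullet> (N *v v)"
    using continuous_attains_sup[OF cK neK cont] by blast
  have "x \<bullet> (N *v x) \<le> (v \<bullet> (N *v v)) * (x \<bullet> x)" if "x \<in> V" for x
  proof (cases "x = 0")
    case False
    define u where "u = x /\<^sub>R norm x"
    have "u \<in> K" unfolding K_def u_def using that False assms(1) by (simp add: subspace_scale)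
    then have "u \<bullet> (N *v u) \<le> v \<bullet> (N *v v)" by (rule vmax)
    moreover have "x \<bullet> (N *v x) = (norm x)\<^sup>2 * (u \<bullet> (N *v u))"
      unfolding u_def using False by (simp add: matrix_vector_mult_scaleR power2_eq_square field_simps)
    moreover have "x \<bullet> x = (norm x)\<^sup>2" by (simp add: dot_square_norm)
    ultimately show ?thesis by (metis mult.commute mult_right_mono zero_le_power2)
  qed simp
  moreover have "v \<in> V" "norm v = 1" using v unfolding K_def by auto
  ultimately show ?thesis using that by blast
qed

text \<open>The maximiser of the Rayleigh quotient on an invariant subspace is an eigenvector: the
  first-order condition of the maximisation is the eigenvector equation.\<close>

lemma symmetric_eigenvector_in_invariant_subspace:
  fixes N :: "real^'n::finite^'n"
  assumes sym: "transpose N = N" and sub: "subspace V"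
    and inv: "\<And>x. x \<in> V \<Longrightarrow> N *v x \<in> V" and ne: "V \<noteq> {0}"
  obtains v \<mu> where "v \<in> V" "norm v = 1" "N *v v = \<mu> *\<^sub>R v"
proof -
  obtain v where vV: "v \<in> V" and vn: "norm v = 1"
    and bound: "\<And>x. x \<in> V \<Longrightarrow> x \<bullet> (N *v x) \<le> (v \<bullet> (N *v v)) * (x \<bullet> x)"
    using quadratic_form_max_on_subspace[OF sub ne] by blast
  define \<rho> where "\<rho> = v \<bullet> (N *v v)"
  define r where "r = \<rho> *\<^sub>R v - N *v v"
  have vv: "v \<bullet> v = 1" using vn by (simp add: dot_square_norm)
  have "w \<bullet> r = 0" if wV: "w \<in> V" for w
  proof -
    have "\<rho> * (v \<bullet> w) - w \<bullet> (N *v v) = 0"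
    proof (rule linear_coeff_eq_0_if_quadratic_nonneg)
      fix t :: real
      have "v + t *\<^sub>R w \<in> V" using vV wV sub by (simp add: subspace_add subspace_scale)
      from bound[OF this]
      have "\<rho> + t * (v \<bullet> (N *v w)) + t * (w \<bullet> (N *v v)) + t\<^sup>2 * (w \<bullet> (N *v w))
           \<le> \<rho> * (1 + 2 * t * (v \<bullet> w) + t\<^sup>2 * (w \<bullet> w))"
        by (simp add: algebra_simps inner_add_left inner_add_right power2_eq_square vv
            \<rho>_def inner_commute[of w v])
      moreover have "v \<bullet> (N *v w) = w \<bullet> (N *v v)"
        using symmetric_inner_matrix_vector[OF sym, of v w] by (simp add: inner_commute)
      ultimately show "0 \<le> 2 * t * (\<rho> * (v \<bullet> w) - w \<bullet> (N *v v)) + t\<^sup>2 * (\<rho> * (w \<bullet> w) - w \<bullet> (N *v w))"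
        by (simp add: algebra_simps)
    qed
    then show ?thesis unfolding r_def by (simp add: inner_diff_right inner_commute)
  qed
  moreover have "r \<in> V" unfolding r_def using vV inv sub by (simp add: subspace_diff subspace_scale)
  ultimately have "r = 0" by (metis inner_eq_zero_iff)
  then have "N *v v = \<rho> *\<^sub>R v" unfolding r_def by simp
  then show ?thesis using that vV vn by blast
qed

lemma symmetric_orthonormal_eigenbasis_of_invariant_subspace:
  fixes N :: "real^'n::finite^'n"
  assumes sym: "transpose N = N"
  shows "subspace V \<Longrightarrow> (\<And>x. x \<in> V \<Longrightarrow> N *v x \<in> V) \<Longrightarrow>
    \<exists>B. B \<subseteq> V \<and> finite B \<and> pairwise orthogonal B \<and> (\<forall>b\<in>B. norm b = 1) \<and> span B = V
        \<and> (\<forall>b\<in>B. \<exists>\<mu>. N *v b = \<mu> *\<^sub>R b)"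
proof (induction "dim V" arbitrary: V rule: less_induct)
  case less
  show ?case
  proof (cases "V = {0}")
    case True
    then show ?thesis by (intro exI[of _ "{}"]) auto
  next
    case False
    obtain v \<mu> where vV: "v \<in> V" and vn: "norm v = 1" and \<mu>: "N *v v = \<mu> *\<^sub>R v"
      using symmetric_eigenvector_in_invariant_subspace[OF sym less.prems False] by blast
    have vv: "v \<bullet> v = 1" using vn by (simp add: dot_square_norm)
    define V' where "V' = {x\<in>V. v \<bullet> x = 0}"
    have sub': "subspace V'" unfolding V'_def using less.prems(1)
      by (auto simp: subspace_def inner_add_right)
    have inv': "N *v x \<in> V'" if "x \<in> V'" for x
      using that less.prems(2) symmetric_inner_matrix_vector[OF sym, of v x] \<mu>
      unfolding V'_def by auto
    have "V' \<subset> V" unfolding V'_def using vV vv by force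
    then have "dim V' < dim V"
      using dim_psubset[of V' V] sub' less.prems(1) by (simp add: span_eq_iff[THEN iffD2])
    from less.hyps[OF this sub' inv'] obtain B where
      B: "B \<subseteq> V'" "finite B" "pairwise orthogonal B" "\<forall>b\<in>B. norm b = 1" "span B = V'"
         "\<forall>b\<in>B. \<exists>\<mu>. N *v b = \<mu> *\<^sub>R b" by blast
    have "V \<subseteq> span (insert v B)"
    proof
      fix x assume "x \<in> V"
      then have "x - (v \<bullet> x) *\<^sub>R v \<in> span B"
        unfolding B(5) V'_def using vV less.prems(1) vv
        by (simp add: subspace_diff subspace_scale inner_diff_right)
      then show "x \<in> span (insert v B)"
        using span_breakdown_eq by blast
    qed
    moreover have "span (insert v B) \<subseteq> V"
      using B(1) vV less.prems(1) unfolding V'_def by (intro span_minimal) auto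
    moreover have "pairwise orthogonal (insert v B)"
      using B(3) B(1) unfolding pairwise_insert V'_def orthogonal_def
      by (auto simp: inner_commute)
    ultimately show ?thesis
      using B vV vn \<mu> unfolding V'_def by (intro exI[of _ "insert v B"]) auto
  qed
qed

lemma symmetric_orthonormal_eigenbasis:
  fixes N :: "real^'n::finite^'n"
  assumes "transpose N = N"
  obtains B where "finite B" "pairwise orthogonal B" "\<And>b. b \<in> B \<Longrightarrow> norm b = 1"
    "span B = UNIV" "\<And>b. b \<in> B \<Longrightarrow> \<exists>\<mu>. N *v b = \<mu> *\<^sub>R b"
  using symmetric_orthonormal_eigenbasis_of_invariant_subspace[OF assms, of UNIV] by auto

lemma orthonormal_basis_expand_matrix_vector:
  fixes N :: "real^'n::finite^'n"
  assumes "finite B" "pairwise orthogonal B" "\<And>b. b \<in> B \<Longrightarrow> norm b = 1" "span B = UNIV"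
  shows "N *v x = (\<Sum>b\<in>B. (x \<bullet> b) *\<^sub>R (N *v b))"
proof -
  have "N *v x = N *v (\<Sum>b\<in>B. (x \<bullet> b) *\<^sub>R b)"
    using orthonormal_basis_expand[OF assms(2,3), of x] assms(1,4) by simp
  then show ?thesis
    by (simp add: linear_sum[OF matrix_vector_mul_linear] matrix_vector_mult_scaleR)
qed

text \<open>The square root scales each vector of an orthonormal eigenbasis of \<open>M\<close> by the square root
  of its (nonnegative) eigenvalue.\<close>

lemma psd_sqrt_exists:
  fixes M :: "real^'n::finite^'n"
  assumes "psd M"
  obtains S where "psd S" "S ** S = M"
proof -
  have sym: "transpose M = M" and pos: "\<And>v. 0 \<le> v \<bullet> (M *v v)" using assms unfolding psd_def by auto
  obtain B where B: "finite B" "pairwise orthogonal B" "\<And>b. b \<in> B \<Longrightarrow> norm b = 1" "span B = UNIV"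
    and eig: "\<And>b. b \<in> B \<Longrightarrow> \<exists>\<mu>. M *v b = \<mu> *\<^sub>R b"
    using symmetric_orthonormal_eigenbasis[OF sym] by blast
  define m where "m b = b \<bullet> (M *v b)" for b
  have Mb: "M *v b = m b *\<^sub>R b" if "b \<in> B" for b
    using eig[OF that] B(3)[OF that] unfolding m_def by (auto simp: dot_square_norm)
  define f where "f x = (\<Sum>b\<in>B. (sqrt (m b) * (x \<bullet> b)) *\<^sub>R b)" for x
  have "linear f"
  proof (rule linearI)
    show "f (x + y) = f x + f y" for x y
      unfolding f_def by (simp add: inner_add_left distrib_left scaleR_add_left sum.distrib)
    show "f (c *\<^sub>R x) = c *\<^sub>R f x" for c x
      unfolding f_def by (simp add: scaleR_sum_right mult.left_commute)
  qed
  define S where "S = matrix f"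
  have Sx: "S *v x = f x" for x
    unfolding S_def using fun_cong[OF matrix_vector_mul(2)[OF \<open>linear f\<close>], of x] by simp
  have Sb: "S *v b = sqrt (m b) *\<^sub>R b" if "b \<in> B" for b
  proof -
    have "b \<bullet> c = (if c = b then 1 else 0)" if "c \<in> B" for c
      using B(2,3) \<open>b \<in> B\<close> that unfolding pairwise_def orthogonal_def
      by (auto simp: dot_square_norm)
    then have "f b = (\<Sum>c\<in>B. if c = b then sqrt (m c) *\<^sub>R c else 0)"
      unfolding f_def by (intro sum.cong) auto
    then show ?thesis using \<open>b \<in> B\<close> B(1) by (simp add: Sx)
  qed
  have mpos: "0 \<le> m b" for b unfolding m_def by (rule pos)
  have "(S ** S) *v x = M *v x" for x
  proof -
    have "(S ** S) *v x = (\<Sum>b\<in>B. (x \<bullet> b) *\<^sub>R (S *v (S *v b)))"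
      using orthonormal_basis_expand_matrix_vector[OF B, of "S ** S" x] by (simp add: matrix_vector_mul_assoc)
    also have "\<dots> = (\<Sum>b\<in>B. (x \<bullet> b) *\<^sub>R (M *v b))"
      using mpos by (intro sum.cong) (simp_all add: Sb Mb matrix_vector_mult_scaleR)
    also have "\<dots> = M *v x" by (rule orthonormal_basis_expand_matrix_vector[OF B, symmetric])
    finally show ?thesis .
  qed
  then have "S ** S = M" by (simp add: matrix_eq)
  moreover have "transpose S = S"
  proof (rule symmetric_if_inner_matrix_vector)
    have "x \<bullet> f y = (\<Sum>b\<in>B. sqrt (m b) * (y \<bullet> b) * (x \<bullet> b))" for x y
      unfolding f_def by (simp add: inner_sum_right)
    then show "x \<bullet> (S *v y) = (S *v x) \<bullet> y" for x y
      by (simp add: Sx inner_commute[of "f _"] mult.commute mult.left_commute)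
  qed
  moreover have "0 \<le> x \<bullet> (S *v x)" for x
    unfolding Sx f_def inner_sum_right using mpos by (intro sum_nonneg) (simp add: inner_commute mult.assoc)
  ultimately show ?thesis using that unfolding psd_def by blast
qed

text \<open>If \<open>S\<^sup>2 = T\<^sup>2\<close>, then \<open>S (S - T) + (S - T) T = 0\<close>; testing this against an eigenvector of
  \<open>S - T\<close> with eigenvalue \<open>\<mu> \<noteq> 0\<close> forces it into the kernels of \<open>S\<close> and \<open>T\<close>, so \<open>\<mu> = 0\<close>.\<close>

lemma psd_sqrt_unique:
  fixes S T :: "real^'n::finite^'n"
  assumes S: "psd S" and T: "psd T" and eq: "S ** S = T ** T"
  shows "S = T"
proof -
  define N where "N = S - T"
  have symN: "transpose N = N" using S T unfolding N_def psd_def by (simp add: transpose_diff)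
  obtain B where B: "finite B" "pairwise orthogonal B" "\<And>b. b \<in> B \<Longrightarrow> norm b = 1" "span B = UNIV"
    and eig: "\<And>b. b \<in> B \<Longrightarrow> \<exists>\<mu>. N *v b = \<mu> *\<^sub>R b"
    using symmetric_orthonormal_eigenbasis[OF symN] by blast
  have Nb: "N *v b = 0" if bB: "b \<in> B" for b
  proof -
    obtain \<mu> where \<mu>: "N *v b = \<mu> *\<^sub>R b" using eig[OF bB] by blast
    have "S *v (N *v b) + N *v (T *v b) = (S ** S) *v b - (T ** T) *v b"
      unfolding N_def by (simp add: matrix_vector_mul_assoc[symmetric] matrix_vector_mult_diff_rdistrib
          matrix_vector_mult_diff_distrib)
    then have "S *v (N *v b) + N *v (T *v b) = 0" using eq by simp
    then have "b \<bullet> (S *v (N *v b)) + b \<bullet> (N *v (T *v b)) = 0"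
      by (metis inner_add_right inner_zero_right)
    moreover have "b \<bullet> (N *v (T *v b)) = \<mu> * (b \<bullet> (T *v b))"
      using symmetric_inner_matrix_vector[OF symN, of b "T *v b"] \<mu> by simp
    ultimately have "\<mu> * (b \<bullet> (S *v b) + b \<bullet> (T *v b)) = 0"
      by (simp add: \<mu> matrix_vector_mult_scaleR algebra_simps)
    moreover have "0 \<le> b \<bullet> (S *v b)" "0 \<le> b \<bullet> (T *v b)" using S T unfolding psd_def by auto
    ultimately have "\<mu> = 0 \<or> (b \<bullet> (S *v b) = 0 \<and> b \<bullet> (T *v b) = 0)" by auto
    then show ?thesis
    proof
      assume "b \<bullet> (S *v b) = 0 \<and> b \<bullet> (T *v b) = 0"
      then have "S *v b = 0" "T *v b = 0" using psd_mult_eq_0_if_quadratic_form_eq_0 S T by blast+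
      then show ?thesis unfolding N_def by (simp add: matrix_vector_mult_diff_rdistrib)
    qed (simp add: \<mu>)
  qed
  have "N *v x = 0" for x
    using orthonormal_basis_expand_matrix_vector[OF B, of N x] Nb by simp
  then have "N = 0" by (simp add: matrix_eq)
  then show ?thesis unfolding N_def by simp
qed

lemma psd_msqrt:
  fixes M :: "real^'n::finite^'n"
  assumes "psd M"
  shows "psd (msqrt M)" and msqrt_mult_self: "msqrt M ** msqrt M = M"
proof -
  have "\<exists>!S. psd S \<and> S ** S = M"
    using psd_sqrt_exists[OF assms] psd_sqrt_unique by metis
  from theI'[OF this] show "psd (msqrt M)" "msqrt M ** msqrt M = M"
    unfolding msqrt_def by auto
qed

section \<open>The data-consistent ellipsoid\<close>

lemma psd_gram_matrix: "psd (M ** transpose M :: real^'p::finite^'p)"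
  unfolding psd_def
  by (simp add: matrix_transpose_mul inner_gram_matrix_vector del: transpose_matrix_vector)

lemma invertible_gram_matrix:
  fixes M :: "real^'t::finite^'p::finite"
  assumes "rank M = CARD('p)"
  shows "invertible (M ** transpose M)"
proof -
  have inj: "inj ((*v) (transpose M))"
    using assms full_rank_injective[of "transpose M"] by (simp add: rank_transpose)
  have "y = 0" if "(M ** transpose M) *v y = 0" for y
  proof -
    have "(transpose M *v y) \<bullet> (transpose M *v y) = 0"
      using that inner_gram_matrix_vector[of y M] by simp
    then have "transpose M *v y = transpose M *v 0" by simp
    then show ?thesis using inj unfolding inj_def by blast
  qed
  then have "inj ((*v) (M ** transpose M))"
    by (intro injI) (metis eq_iff_diff_eq_0 matrix_vector_mult_diff_distrib)
  then show ?thesis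
    using invertible_left_inverse matrix_left_invertible_injective by blast
qed

lemma psd_matrix_inv:
  fixes A :: "real^'p::finite^'p"
  assumes "invertible A" "psd A"
  shows "psd (matrix_inv A)"
proof -
  have sym: "transpose A = A" using assms(2) unfolding psd_def by simp
  note inv = matrix_inv_symmetric[OF assms(1) sym]
  have "x \<bullet> (matrix_inv A *v x) = (matrix_inv A *v x) \<bullet> (A *v (matrix_inv A *v x))" for x
    by (simp add: matrix_vector_mul_assoc inv(1) inner_commute)
  then show ?thesis using assms(2) inv(3) unfolding psd_def by simp
qed

text \<open>Cauchy-Schwarz for the inner product \<open>x \<bullet> (A *v y)\<close> and its dual norm.\<close>

lemma inner_le_sqrt_quadratic_form_mult_norm:
  fixes A :: "real^'p::finite^'p"
  assumes "invertible A" "psd A"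
  shows "d \<bullet> \<phi> \<le> sqrt (d \<bullet> (A *v d)) * norm (msqrt (matrix_inv A) *v \<phi>)"
proof -
  define P where "P = msqrt (matrix_inv A)"
  have sym: "transpose A = A" using assms(2) unfolding psd_def by simp
  note inv = matrix_inv_symmetric[OF assms(1) sym]
  have psdP: "psd P" and PP: "P ** P = matrix_inv A"
    unfolding P_def using psd_msqrt[OF psd_matrix_inv[OF assms]] by auto
  have symP: "transpose P = P" using psdP unfolding psd_def by simp
  have "d \<bullet> \<phi> = d \<bullet> (A *v (P *v (P *v \<phi>)))"
    by (simp add: matrix_vector_mul_assoc PP inv(1))
  also have "\<dots> = (P *v (A *v d)) \<bullet> (P *v \<phi>)"
    by (simp add: symmetric_inner_matrix_vector[OF sym] symmetric_inner_matrix_vector[OF symP])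
  also have "\<dots> \<le> norm (P *v (A *v d)) * norm (P *v \<phi>)" by (rule norm_cauchy_schwarz)
  also have "norm (P *v (A *v d)) = sqrt (d \<bullet> (A *v d))"
  proof -
    have "(norm (P *v (A *v d)))\<^sup>2 = (A *v d) \<bullet> (matrix_inv A *v (A *v d))"
      using psd_quadratic_form_mult_self[OF psdP] PP by metis
    also have "\<dots> = d \<bullet> (A *v d)"
      by (simp add: matrix_vector_mul_assoc inv(2) inner_commute)
    finally show ?thesis by (metis norm_ge_zero real_sqrt_unique)
  qed
  finally show ?thesis unfolding P_def .
qed

lemma sum_UNIV_Plus:
  fixes f :: "'a::finite + 'b::finite \<Rightarrow> 'c::comm_monoid_add"
  shows "(\<Sum>i\<in>UNIV. f i) = (\<Sum>a\<in>UNIV. f (Inl a)) + (\<Sum>b\<in>UNIV. f (Inr b))"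
  by (subst UNIV_Plus_UNIV[symmetric], subst sum.Plus) auto

definition hstack :: "real^'a::finite^'n::finite \<Rightarrow> real^'b::finite^'n \<Rightarrow> real^('a + 'b)^'n" where
  "hstack A B = (\<chi> i k. case k of Inl a \<Rightarrow> A $ i $ a | Inr b \<Rightarrow> B $ i $ b)"

lemma hstack_mult_vstack: "hstack A B *v vstack u v = A *v u + B *v v"
  unfolding hstack_def vstack_def matrix_vector_mult_def
  by (simp add: vec_eq_iff sum_UNIV_Plus)

lemma hstack_mult_mstack: "hstack A B ** mstack M N = A ** M + B ** N"
  unfolding hstack_def mstack_def matrix_matrix_mult_def
  by (simp add: vec_eq_iff sum_UNIV_Plus)

text \<open>The true parameters \<open>\<Theta> = [A B]\<close> lie in the data-consistent ellipsoid
  \<open>\<Theta> Ae \<Theta>\<^sup>T + \<Theta> Be + Be\<^sup>T \<Theta>\<^sup>T + Ce \<preceq> 0\<close>, tested here against \<open>g\<close>: the quadratic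
  form equals \<open>|D\<^sup>T g|\<^sup>2 - c |g|\<^sup>2\<close>.\<close>

lemma data_consistent_quadratic_form_nonpos:
  fixes \<Theta> :: "real^'p::finite^'n::finite" and M :: "real^'t::finite^'p" and D X :: "real^'t^'n"
  assumes data: "X = \<Theta> ** M + D" and noise: "loewner_le (D ** transpose D) (c *\<^sub>R mat 1)"
  shows "(transpose \<Theta> *v g) \<bullet> ((M ** transpose M) *v (transpose \<Theta> *v g))
       + 2 * ((transpose \<Theta> *v g) \<bullet> (- (M ** transpose X) *v g))
       + g \<bullet> ((- (c *\<^sub>R mat 1) + X ** transpose X) *v g) \<le> 0"
proof -
  define p where "p = transpose M *v (transpose \<Theta> *v g)"
  define q where "q = transpose X *v g"
  have "transpose D *v g = q - p"
    unfolding p_def q_def data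
    by (simp add: transpose_add matrix_transpose_mul matrix_vector_mult_add_rdistrib matrix_vector_mul_assoc
        del: transpose_matrix_vector)
  moreover have "0 \<le> g \<bullet> ((c *\<^sub>R mat 1 - D ** transpose D) *v g)"
    using noise unfolding loewner_le_def psd_def by blast
  ultimately have "(q - p) \<bullet> (q - p) \<le> c * (g \<bullet> g)"
    by (simp add: matrix_vector_mult_diff_rdistrib inner_diff_right inner_gram_matrix_vector
        scaleR_matrix_vector_assoc[symmetric] del: transpose_matrix_vector)
  moreover have "(transpose \<Theta> *v g) \<bullet> (- (M ** transpose X) *v g) = - (p \<bullet> q)"
    unfolding p_def q_def
    by (metis inner_minus_right inner_transpose_matrix_vector matrix_vector_mul_assoc
        matrix_vector_mult_uminus transpose_transpose)
  moreover have "g \<bullet> ((- (c *\<^sub>R mat 1) + X ** transpose X) *v g) = q \<bullet> q - c * (g \<bullet> g)"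
    unfolding q_def
    by (simp only: matrix_vector_mult_add_rdistrib matrix_vector_mult_uminus inner_add_right
        inner_minus_right inner_gram_matrix_vector scaleR_matrix_vector_assoc[symmetric]
        matrix_vector_mul_lid inner_scaleR_right)
  moreover have "(transpose \<Theta> *v g) \<bullet> ((M ** transpose M) *v (transpose \<Theta> *v g)) = p \<bullet> p"
    unfolding p_def by (rule inner_gram_matrix_vector)
  ultimately show ?thesis
    by (simp add: inner_diff_left inner_diff_right inner_commute)
qed

lemma ellipsoid_completed_square:
  fixes Ae :: "real^'p::finite^'p" and Be :: "real^'n::finite^'p" and Ce :: "real^'n^'n"
  assumes "invertible Ae" "transpose Ae = Ae"
  shows "(y + matrix_inv Ae *v (Be *v g)) \<bullet> (Ae *v (y + matrix_inv Ae *v (Be *v g)))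
           - g \<bullet> ((transpose Be ** matrix_inv Ae ** Be - Ce) *v g)
         = y \<bullet> (Ae *v y) + 2 * (y \<bullet> (Be *v g)) + g \<bullet> (Ce *v g)"
proof -
  define b where "b = Be *v g"
  note inv = matrix_inv_symmetric[OF assms]
  have "g \<bullet> ((transpose Be ** matrix_inv Ae ** Be - Ce) *v g) = b \<bullet> (matrix_inv Ae *v b) - g \<bullet> (Ce *v g)"
    unfolding b_def
    by (simp only: matrix_vector_mult_diff_rdistrib matrix_vector_mul_assoc[symmetric] inner_diff_right
        inner_transpose_matrix_vector)
  moreover have "(matrix_inv Ae *v b) \<bullet> (Ae *v y) = y \<bullet> b"
    using symmetric_inner_matrix_vector[OF assms(2), of "matrix_inv Ae *v b" y]
    by (simp add: matrix_vector_mul_assoc inv(1) inner_commute)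
  ultimately show ?thesis
    unfolding b_def[symmetric]
    by (simp add: matrix_vector_right_distrib inner_add_left inner_add_right matrix_vector_mul_assoc
        inv(1) inner_commute)
qed

lemma ellipsoid_support_bound:
  fixes Ae :: "real^'p::finite^'p" and Be :: "real^'n::finite^'p" and Ce :: "real^'n^'n"
    and Y :: "real^'n^'p"
  assumes Ae: "invertible Ae" "psd Ae" and Ce: "transpose Ce = Ce"
    and ellipsoid: "\<And>g. (Y *v g) \<bullet> (Ae *v (Y *v g)) + 2 * ((Y *v g) \<bullet> (Be *v g)) + g \<bullet> (Ce *v g) \<le> 0"
  defines "Q \<equiv> transpose Be ** matrix_inv Ae ** Be - Ce"
  shows "psd Q"
    and "g \<bullet> (transpose Y *v \<phi>)
           \<le> g \<bullet> (transpose (- (matrix_inv Ae ** Be)) *v \<phi>)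
             + norm (msqrt Q *v g) * norm (msqrt (matrix_inv Ae) *v \<phi>)"
proof -
  have sym: "transpose Ae = Ae" using Ae(2) unfolding psd_def by simp
  define d where "d g = Y *v g + matrix_inv Ae *v (Be *v g)" for g
  have dQ: "d g \<bullet> (Ae *v d g) \<le> g \<bullet> (Q *v g)" for g
    using ellipsoid_completed_square[OF Ae(1) sym, of "Y *v g" Be g Ce] ellipsoid[of g]
    unfolding d_def Q_def by linarith
  have "transpose Q = Q"
    unfolding Q_def using Ce matrix_inv_symmetric(3)[OF Ae(1) sym]
    by (simp add: transpose_diff matrix_transpose_mul matrix_mul_assoc)
  then show psdQ: "psd Q"
    using dQ Ae(2) order_trans unfolding psd_def by blast
  have "g \<bullet> (transpose Y *v \<phi>) - g \<bullet> (transpose (- (matrix_inv Ae ** Be)) *v \<phi>) = d g \<bullet> \<phi>"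
    unfolding d_def
    by (simp add: inner_transpose_matrix_vector matrix_vector_mult_uminus matrix_vector_mul_assoc
        inner_add_left del: transpose_matrix_vector)
  also have "\<dots> \<le> sqrt (d g \<bullet> (Ae *v d g)) * norm (msqrt (matrix_inv Ae) *v \<phi>)"
    by (rule inner_le_sqrt_quadratic_form_mult_norm[OF Ae])
  also have "\<dots> \<le> norm (msqrt Q *v g) * norm (msqrt (matrix_inv Ae) *v \<phi>)"
  proof (rule mult_right_mono)
    have "d g \<bullet> (Ae *v d g) \<le> (norm (msqrt Q *v g))\<^sup>2"
      using dQ[of g] psd_quadratic_form_mult_self[OF psd_msqrt(1)[OF psdQ], of g]
      by (simp add: msqrt_mult_self[OF psdQ])
    then show "sqrt (d g \<bullet> (Ae *v d g)) \<le> norm (msqrt Q *v g)" by (simp add: real_le_lsqrt)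
  qed simp
  finally show "g \<bullet> (transpose Y *v \<phi>) \<le> g \<bullet> (transpose (- (matrix_inv Ae ** Be)) *v \<phi>)
      + norm (msqrt Q *v g) * norm (msqrt (matrix_inv Ae) *v \<phi>)" by simp
qed

lemma sum_mat_mult: "(\<Sum>b\<in>UNIV. (mat c :: 'a::semiring_1^'n::finite^'n) $ a $ b * f b) = c * f a"
  by (simp add: mat_def if_distrib[of "\<lambda>x. x * _"] cong: if_cong)

text \<open>Test \<open>H \<preceq> 0\<close> with \<open>z = (1, u/(2\<eta>), w/(2\<eta>))\<close>, which annihilates the off-diagonal
  blocks (a Schur complement).\<close>

lemma block3_nonpos_imp_schur:
  fixes u :: "real^'p::finite" and w :: "real^'n::finite"
  assumes H: "loewner_le (block3 s u w ((-2 * \<eta>) *\<^sub>R mat 1) ((-2 * \<eta>) *\<^sub>R mat 1)) 0" and "\<eta> > 0"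
  shows "s + (norm u)\<^sup>2 / (2 * \<eta>) + (norm w)\<^sup>2 / (2 * \<eta>) \<le> 0"
proof -
  define H where "H = block3 s u w ((-2 * \<eta>) *\<^sub>R mat 1) ((-2 * \<eta>) *\<^sub>R (mat 1 :: real^'n^'n))"
  define z :: "real^(unit + ('p + 'n))" where
    "z = (\<chi> i. case i of Inl _ \<Rightarrow> 1 | Inr (Inl a) \<Rightarrow> u $ a / (2 * \<eta>) | Inr (Inr k) \<Rightarrow> w $ k / (2 * \<eta>))"
  have "0 \<le> z \<bullet> ((0 - H) *v z)" using H unfolding loewner_le_def psd_def H_def by blast
  then have "z \<bullet> (H *v z) \<le> 0" by (simp add: matrix_vector_mult_uminus)
  have Hz_Inl: "(H *v z) $ Inl x = s + (norm u)\<^sup>2 / (2 * \<eta>) + (norm w)\<^sup>2 / (2 * \<eta>)" for x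
    unfolding matrix_vector_mult_def H_def block3_def z_def
    by (simp add: sum_UNIV_Plus power2_norm_eq_inner inner_vec_def sum_divide_distrib)
  have "z $ Inl x = 1" for x by (simp add: z_def)
  have Hz_Inr: "(H *v z) $ Inr y = 0" for y
    unfolding matrix_vector_mult_def H_def block3_def z_def using \<open>\<eta> > 0\<close>
    by (cases y) (simp_all add: sum_UNIV_Plus sum_negf sum_mat_mult)
  have "z \<bullet> (H *v z) = s + (norm u)\<^sup>2 / (2 * \<eta>) + (norm w)\<^sup>2 / (2 * \<eta>)"
    unfolding inner_vec_def by (simp add: sum_UNIV_Plus Hz_Inl Hz_Inr \<open>z $ Inl _ = 1\<close> UNIV_unit)
  with \<open>z \<bullet> (H *v z) \<le> 0\<close> show ?thesis by simp
qed

lemma block3_nonpos_imp_bound: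
  fixes u :: "real^'p::finite" and w :: "real^'n::finite"
  assumes "loewner_le (block3 s (\<eta> *\<^sub>R u) w ((-2 * \<eta>) *\<^sub>R mat 1) ((-2 * \<eta>) *\<^sub>R mat 1)) 0"
    and "\<eta> > 0"
  shows "s + norm w * norm u \<le> 0"
proof -
  have young: "norm w * norm u \<le> \<eta> * (norm u)\<^sup>2 / 2 + (norm w)\<^sup>2 / (2 * \<eta>)"
  proof -
    have "0 \<le> (\<eta> * norm u - norm w)\<^sup>2" by simp
    then show ?thesis using \<open>\<eta> > 0\<close> by (simp add: field_simps power2_eq_square)
  qed
  have "(norm (\<eta> *\<^sub>R u))\<^sup>2 / (2 * \<eta>) = \<eta> * (norm u)\<^sup>2 / 2"
    using \<open>\<eta> > 0\<close> by (simp add: power2_eq_square field_simps)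
  then show ?thesis using block3_nonpos_imp_schur[OF assms] young by linarith
qed

section \<open>Barrier functions and invariance\<close>

lemma poly_fun_differentiable:
  fixes h :: "real^'n::finite \<Rightarrow> real"
  assumes "poly_fun h"
  shows "h differentiable (at x)"
proof -
  obtain S c where "h = (\<lambda>x. \<Sum>\<alpha>\<in>S. c \<alpha> * (\<Prod>i\<in>UNIV. (x $ i) ^ \<alpha> i))"
    using assms unfolding poly_fun_def by blast
  moreover have "(\<lambda>x. \<Sum>\<alpha>\<in>S. c \<alpha> * (\<Prod>i\<in>UNIV. (x $ i) ^ \<alpha> i)) differentiable (at x)"
    unfolding differentiable_def
    by (rule exI, (rule derivative_eq_intros refl bounded_linear_vec_nth[THEN bounded_linear.has_derivative] | simp)+)
  ultimately show ?thesis by simp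
qed

lemma has_derivative_grad:
  fixes h :: "real^'n::finite \<Rightarrow> real"
  assumes "h differentiable (at y)"
  shows "(h has_derivative (\<lambda>v. grad h y \<bullet> v)) (at y)"
proof -
  define D where "D = frechet_derivative h (at y)"
  have hD: "(h has_derivative D) (at y)" using assms unfolding D_def by (simp add: frechet_derivative_works)
  have lin: "linear D" using has_derivative_linear[OF hD] .
  have "D v = grad h y \<bullet> v" for v
  proof -
    have "D v = D (\<Sum>i\<in>UNIV. (v $ i) *\<^sub>R axis i 1)"
      using basis_expansion[of v] by (simp add: scalar_mult_eq_scaleR)
    also have "\<dots> = (\<Sum>i\<in>UNIV. (v $ i) * D (axis i 1))"
      by (simp add: linear_sum[OF lin] linear_scale[OF lin])
    finally show ?thesis
      unfolding grad_def D_def inner_vec_def by (simp add: mult.commute)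
  qed
  then show ?thesis using hD by (metis ext)
qed

text \<open>A continuous function can only cross from \<open>\<le> 0\<close> to \<open>> 0\<close> through a last zero, where a
  negative derivative would push it back below zero.\<close>

lemma nonpos_if_deriv_neg_at_zeros:
  fixes \<phi> \<phi>' :: "real \<Rightarrow> real"
  assumes "a \<le> b" "\<phi> a \<le> 0"
    and deriv: "\<And>t. t \<in> {a..b} \<Longrightarrow> (\<phi> has_real_derivative \<phi>' t) (at t within {a..b})"
    and neg: "\<And>t. t \<in> {a..b} \<Longrightarrow> \<phi> t = 0 \<Longrightarrow> \<phi>' t < 0"
  shows "\<phi> b \<le> 0"
proof (rule ccontr)
  assume "\<not> \<phi> b \<le> 0"
  have cont: "continuous_on {a..b} \<phi>"
    unfolding continuous_on_eq_continuous_within using deriv DERIV_continuous by blast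
  define S where "S = {t \<in> {a..b}. \<phi> t \<le> 0}"
  define t0 where "t0 = Sup S"
  have "closed S" unfolding S_def
    by (rule continuous_on_closed_Collect_le[OF cont continuous_on_const closed_atLeastAtMost])
  moreover have "a \<in> S" "bdd_above S" unfolding S_def using assms(1,2) by (auto intro: bdd_aboveI[of _ b])
  ultimately have "t0 \<in> S" unfolding t0_def using closed_contains_Sup by blast
  have up: "t \<le> t0" if "t \<in> S" for t unfolding t0_def using cSup_upper[OF that \<open>bdd_above S\<close>] .
  have t0: "a \<le> t0" "t0 \<le> b" "\<phi> t0 \<le> 0" using \<open>t0 \<in> S\<close> unfolding S_def by auto
  with \<open>\<not> \<phi> b \<le> 0\<close> have "t0 < b" by (cases "t0 = b") auto
  have "continuous_on {t0..b} \<phi>" using continuous_on_subset[OF cont] t0(1) by auto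
  then obtain s where s: "t0 \<le> s" "s \<le> b" "\<phi> s = 0"
    using IVT'[of \<phi> t0 0 b] t0(3) \<open>\<not> \<phi> b \<le> 0\<close> \<open>t0 < b\<close> by auto
  then have "s \<in> S" unfolding S_def using t0 by auto
  with s up have "s = t0" by force
  with s have "\<phi> t0 = 0" by simp
  have "t0 \<in> {a..b}" using t0 by simp
  obtain e where e: "e > 0"
    and dec: "\<And>h. h > 0 \<Longrightarrow> t0 + h \<in> {a..b} \<Longrightarrow> h < e \<Longrightarrow> \<phi> t0 > \<phi> (t0 + h)"
    using has_real_derivative_neg_dec_right[OF deriv[OF \<open>t0 \<in> {a..b}\<close>]
        neg[OF \<open>t0 \<in> {a..b}\<close> \<open>\<phi> t0 = 0\<close>]] by blast
  define h where "h = min (e / 2) (b - t0)"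
  have h: "h > 0" "h < e" "t0 + h \<in> {a..b}" unfolding h_def using e t0 \<open>t0 < b\<close> by auto
  then have "\<phi> (t0 + h) < 0" using dec \<open>\<phi> t0 = 0\<close> by fastforce
  then have "t0 + h \<in> S" unfolding S_def using h(3) by simp
  then show False using up h(1) by fastforce
qed

lemma invariant_sublevel_set:
  fixes f :: "real^'n::finite \<Rightarrow> real^'n" and h :: "real^'n \<Rightarrow> real"
  assumes diff: "\<And>y. h differentiable (at y)"
    and boundary: "\<And>y. h y = 0 \<Longrightarrow> grad h y \<bullet> f y < 0"
  shows "invariant_set f {x. h x \<le> 0}"
  unfolding invariant_set_def
proof (intro allI impI ballI)
  fix x :: "real \<Rightarrow> real^'n" and J t1
  assume "maximal_solution f x J \<and> x 0 \<in> {x. h x \<le> 0}" and "t1 \<in> J"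
  then have J: "is_interval J" "0 \<in> J" "\<And>t. t \<in> J \<Longrightarrow> 0 \<le> t"
    and x': "\<And>t. t \<in> J \<Longrightarrow> (x has_vector_derivative f (x t)) (at t within J)"
    and "h (x 0) \<le> 0"
    unfolding maximal_solution_def ode_solution_def by auto
  have "0 \<le> t1" using J(3) \<open>t1 \<in> J\<close> .
  have sub: "{0..t1} \<subseteq> J"
    using J(1,2) \<open>t1 \<in> J\<close> unfolding is_interval_1 by (meson atLeastAtMost_iff subsetI)
  have "((\<lambda>t. h (x t)) has_real_derivative grad h (x t) \<bullet> f (x t)) (at t within {0..t1})"
    if "t \<in> {0..t1}" for t
  proof -
    have "(x has_derivative (\<lambda>s. s *\<^sub>R f (x t))) (at t within {0..t1})"
      using has_vector_derivative_within_subset[OF x'[OF subsetD[OF sub that]] sub]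
      unfolding has_vector_derivative_def .
    from diff_chain_within[OF this has_derivative_at_withinI[OF has_derivative_grad[OF diff]]]
    show ?thesis
      unfolding has_field_derivative_def o_def by (simp add: mult_commute_abs)
  qed
  then have "h (x t1) \<le> 0"
    using nonpos_if_deriv_neg_at_zeros[of 0 t1 "\<lambda>t. h (x t)" "\<lambda>t. grad h (x t) \<bullet> f (x t)"]
      boundary \<open>0 \<le> t1\<close> \<open>h (x 0) \<le> 0\<close> by blast
  then show "x t1 \<in> {x. h x \<le> 0}" by simp
qed

theorem mainTheorem4:
  fixes A :: "real^'na::finite^'n::finite"
    and B :: "real^'nb::finite^'n"
    and Z :: "real^'n \<Rightarrow> real^'na"
    and W :: "real^'n \<Rightarrow> real^'m::finite^'nb"
    and xs :: "'t::finite \<Rightarrow> real^'n" and us :: "'t \<Rightarrow> real^'m"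
    and xd :: "'t \<Rightarrow> real^'n" and d :: "'t \<Rightarrow> real^'n"
    and \<omega> \<epsilon> :: real
    and l \<eta> h :: "real^'n \<Rightarrow> real" and K :: "real^'n \<Rightarrow> real^'m"
  assumes Z_mon: "\<forall>k. monomial_fun (\<lambda>x. Z x $ k)"
    and W_mon: "\<forall>k l. monomial_fun (\<lambda>x. W x $ k $ l)"
    and data: "\<forall>j. xd j = A *v Z (xs j) + B *v (W (xs j) *v us j) + d j"
    and omega: "\<omega> \<ge> 0"
    and noise: "loewner_le ((\<chi> i j. d j $ i) ** transpose (\<chi> i j. d j $ i))
                           ((real CARD('t) * \<omega>) *\<^sub>R mat 1)"
    and eps: "\<epsilon> > 0"
    and rank: "rank (mstack (\<chi> i j. Z (xs j) $ i) (\<chi> i j. (W (xs j) *v us j) $ i))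
                 = CARD('na + 'nb)"
    and polys: "poly_fun l" "poly_fun \<eta>" "poly_fun h" "poly_vec_fun K"
    and eta_pos: "\<forall>x. \<eta> x > 0"
    and LMI: "\<forall>x. let X1 = (\<chi> i j. xd j $ i);
                    M = mstack (\<chi> i j. Z (xs j) $ i) (\<chi> i j. (W (xs j) *v us j) $ i);
                    Ae = M ** transpose M;
                    Be = - (M ** transpose X1);
                    Ce = - ((real CARD('t) * \<omega>) *\<^sub>R mat 1) + X1 ** transpose X1;
                    \<zeta> = - (matrix_inv Ae ** Be);
                    P = msqrt (matrix_inv Ae);
                    Q = transpose Be ** matrix_inv Ae ** Be - Ce;
                    \<phi> = vstack (Z x) (W x *v K x)
                in loewner_le
                     (block3 (l x * h x + \<epsilon> + grad h x \<bullet> (transpose \<zeta> *v \<phi>))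
                             (\<eta> x *\<^sub>R (P *v \<phi>))
                             (msqrt Q *v grad h x)
                             ((-2 * \<eta> x) *\<^sub>R mat 1)
                             ((-2 * \<eta> x) *\<^sub>R mat 1))
                     0"
  shows "invariant_set (\<lambda>x. A *v Z x + B *v (W x *v K x)) {x. h x \<le> 0}"
proof -
  define X1 :: "real^'t^'n" where "X1 = (\<chi> i j. xd j $ i)"
  define M :: "real^'t^('na + 'nb)" where "M = mstack (\<chi> i j. Z (xs j) $ i) (\<chi> i j. (W (xs j) *v us j) $ i)"
  define Ae where "Ae = M ** transpose M"
  define Be where "Be = - (M ** transpose X1)"
  define Ce :: "real^'n^'n" where "Ce = - ((real CARD('t) * \<omega>) *\<^sub>R mat 1) + X1 ** transpose X1"
  define Q where "Q = transpose Be ** matrix_inv Ae ** Be - Ce"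
  define \<phi> where "\<phi> x = vstack (Z x) (W x *v K x)" for x
  have "X1 = hstack A B ** M + (\<chi> i j. d j $ i)"
    using data unfolding X1_def M_def hstack_mult_mstack
    by (simp add: vec_eq_iff matrix_matrix_mult_def matrix_vector_mult_def)
  note ellipsoid = data_consistent_quadratic_form_nonpos[OF this noise, folded Ae_def Be_def Ce_def]
  have Ce: "transpose Ce = Ce"
    unfolding Ce_def by (simp add: transpose_diff transpose_scalar matrix_transpose_mul)
  have Ae: "invertible Ae" "psd Ae"
    unfolding Ae_def using invertible_gram_matrix[OF rank] psd_gram_matrix by (simp_all add: M_def)
  note support = ellipsoid_support_bound(2)[OF Ae Ce ellipsoid, folded Q_def, unfolded transpose_transpose]
  have "grad h x \<bullet> (A *v Z x + B *v (W x *v K x)) < 0" if "h x = 0" for x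
  proof -
    have "l x * h x + \<epsilon> + grad h x \<bullet> (transpose (- (matrix_inv Ae ** Be)) *v \<phi> x)
        + norm (msqrt Q *v grad h x) * norm (msqrt (matrix_inv Ae) *v \<phi> x) \<le> 0"
      using LMI[rule_format, of x] eta_pos block3_nonpos_imp_bound
      unfolding Let_def X1_def[symmetric] M_def[symmetric] Ae_def[symmetric] Be_def[symmetric]
        Ce_def[symmetric] Q_def[symmetric] \<phi>_def[symmetric] by blast
    then show ?thesis
      using support[of "grad h x" "\<phi> x"] \<open>h x = 0\<close> eps unfolding \<phi>_def hstack_mult_vstack by simp
  qed
  then show ?thesis by (rule invariant_sublevel_set[OF poly_fun_differentiable[OF polys(3)]])
qed

end
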